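(* Consider the independent block-fading binary symmetric wiretap channel with parameters $q_1,q_1^*\in[0,1]$, $q_2=1-q_1$, $q_2^*=1-q_1^*$, and crossover probabilities satisfying $p_1\le p_2\le p_1^*\le p_2^*\le 0.5$. Its secrecy capacity with channel state information available only at the decoders satisfies $$C^s_{\textrm{CSI-D}}\le q_1^*H(p_1^* )+q_2^*H(p_2^* )-q_1H(p_1)-q_2H(p_2).$$
   Context: $H(p)=-p\log_2 p-(1-p)\log_2(1-p)$ is the binary entropy function, and BSC$(p)$ denotes the binary symmetric channel with crossover probability $p$. Independent block-fading binary symmetric wiretap channel: the transmitter sends $NB$ binary symbols $X_{1:NB}$ organized in $B$ fading blocks of length $N$. Each block $k$ has a main-channel state $S_k\in\{1,2\}$ with $\Pr(S_k=1)=q_1$ and an eavesdropper-channel state $S^*_k\in\{1,2\}$ with $\Pr(S_k^*=1)=q_1^*$; all these states are mutually independent (across blocks and between the two channels) and constant within a block. Within block $k$, the legitimate receiver observes the output $Y$ of $N$ independent uses of BSC$(p_{S_k})$, and the eavesdropper observes the output $Z$ of $N$ independent uses of BSC$(p^*_{S^*_k})$. Let $\mathsf{S}$ denote all the state realizations $(S_k,S_k^* )_{k=1}^B$. A code consists of a (possibly randomized) encoder $X_{1:NB}=f(\mathsf{M})$ of a uniformly distributed message $\mathsf{M}$, which knows only the state distributions (not the realizations), and a decoder $\hat{\mathsf{M}}=g(Y_{1:NB},\mathsf{S})$; its rate is $\frac{1}{NB}\log_2$ of the message-set size. A rate $R$ is achievable if there are such codes of rate at least $R$ (asymptotically) with $N,B\to\infty$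 such that $\Pr\{\mathsf{M}\ne\hat{\mathsf{M}}\}\to0$ and $\frac{1}{NB}I(\mathsf{M};Z_{1:NB}\mid\mathsf{S})\to 0$. $C^s_{\textrm{CSI-D}}$ is the supremum of achievable rates. *)

theory Defs
  imports Complex_Main "HOL-Library.Extended_Real"
begin

definition Hb :: "real \<Rightarrow> real" where
  "Hb p = (if p = 0 \<or> p = 1 then 0 else - p * log 2 p - (1 - p) * log 2 (1 - p))"

definition words :: "nat \<Rightarrow> bool list set" where
  "words n = {xs. length xs = n}"

text \<open>State realizations: one pair (S_k, S^*_k) per block; True encodes state 1,
  False encodes state 2.\<close>
definition states :: "nat \<Rightarrow> (bool \<times> bool) list set" where
  "states B = {ss. length ss = B}"

definition state_prob :: "real \<Rightarrow> real \<Rightarrow> (bool \<times> bool) list \<Rightarrow> real" where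
  "state_prob q1 q1s ss =
     (\<Prod>k<length ss. (if fst (ss ! k) then q1 else 1 - q1) * (if snd (ss ! k) then q1s else 1 - q1s))"

text \<open>Block-fading BSC: symbol i lies in block i div N; the crossover probability
  of that block is pa if the block state is 1 (True), pb otherwise.\<close>
definition bf_bsc :: "nat \<Rightarrow> real \<Rightarrow> real \<Rightarrow> bool list \<Rightarrow> bool list \<Rightarrow> bool list \<Rightarrow> real" where
  "bf_bsc N pa pb st x y =
     (\<Prod>i<length x. let p = (if st ! (i div N) then pa else pb) in
        (if x ! i = y ! i then 1 - p else p))"

text \<open>A code of block length N, B blocks: K messages {0..<K}, randomized encoder
  enc m x = Pr(X = x | M = m) (independent of the state realizations),
  decoder dec ss y using all state realizations.\<close>
definition valid_code :: "nat \<Rightarrow> nat \<Rightarrow> nat \<Rightarrow> (nat \<Rightarrow> bool list \<Rightarrow> real) \<Rightarrow> bool" where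
  "valid_code N B K enc \<longleftrightarrow> K \<ge> 1 \<and>
     (\<forall>m<K. (\<forall>x\<in>words (N*B). enc m x \<ge> 0) \<and> (\<Sum>x\<in>words (N*B). enc m x) = 1)"

definition err_prob ::
  "real \<Rightarrow> real \<Rightarrow> real \<Rightarrow> real \<Rightarrow> nat \<Rightarrow> nat \<Rightarrow> nat \<Rightarrow> (nat \<Rightarrow> bool list \<Rightarrow> real)
   \<Rightarrow> ((bool \<times> bool) list \<Rightarrow> bool list \<Rightarrow> nat) \<Rightarrow> real" where
  "err_prob q1 q1s p1 p2 N B K enc dec =
     (\<Sum>m<K. \<Sum>ss\<in>states B. \<Sum>x\<in>words (N*B). \<Sum>y\<in>words (N*B).
        (1 / real K) * state_prob q1 q1s ss * enc m x * bf_bsc N p1 p2 (map fst ss) x y *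
        (if dec ss y \<noteq> m then 1 else 0))"

definition eve_out ::
  "real \<Rightarrow> real \<Rightarrow> nat \<Rightarrow> nat \<Rightarrow> (nat \<Rightarrow> bool list \<Rightarrow> real) \<Rightarrow> (bool \<times> bool) list
   \<Rightarrow> nat \<Rightarrow> bool list \<Rightarrow> real" where
  "eve_out p1s p2s N B enc ss m z =
     (\<Sum>x\<in>words (N*B). enc m x * bf_bsc N p1s p2s (map snd ss) x z)"

definition xlog :: "real \<Rightarrow> real \<Rightarrow> real" where
  "xlog a b = (if a = 0 then 0 else a * log 2 (a / b))"

text \<open>I(M; Z | S) in bits, with M uniform on {0..<K}.\<close>
definition leakage ::
  "real \<Rightarrow> real \<Rightarrow> real \<Rightarrow> real \<Rightarrow> nat \<Rightarrow> nat \<Rightarrow> nat \<Rightarrow> (nat \<Rightarrow> bool list \<Rightarrow> real) \<Rightarrow> real" where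
  "leakage q1 q1s p1s p2s N B K enc =
     (\<Sum>ss\<in>states B. state_prob q1 q1s ss *
        (\<Sum>m<K. \<Sum>z\<in>words (N*B).
           (1 / real K) * xlog (eve_out p1s p2s N B enc ss m z)
              ((\<Sum>m'<K. eve_out p1s p2s N B enc ss m' z) / real K)))"

definition achievable_CSI_D ::
  "real \<Rightarrow> real \<Rightarrow> real \<Rightarrow> real \<Rightarrow> real \<Rightarrow> real \<Rightarrow> real \<Rightarrow> bool" where
  "achievable_CSI_D q1 q1s p1 p2 p1s p2s R \<longleftrightarrow>
     (\<exists>(N :: nat \<Rightarrow> nat) (B :: nat \<Rightarrow> nat) (K :: nat \<Rightarrow> nat)
        (enc :: nat \<Rightarrow> nat \<Rightarrow> bool list \<Rightarrow> real)
        (dec :: nat \<Rightarrow> (bool \<times> bool) list \<Rightarrow> bool list \<Rightarrow> nat).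
        filterlim N at_top sequentially \<and> filterlim B at_top sequentially \<and>
        (\<forall>n. valid_code (N n) (B n) (K n) (enc n)) \<and>
        (\<forall>\<epsilon>>0. eventually (\<lambda>n. log 2 (real (K n)) / real (N n * B n) \<ge> R - \<epsilon>) sequentially) \<and>
        (\<lambda>n. err_prob q1 q1s p1 p2 (N n) (B n) (K n) (enc n) (dec n)) \<longlonglongrightarrow> 0 \<and>
        (\<lambda>n. leakage q1 q1s p1s p2s (N n) (B n) (K n) (enc n) / real (N n * B n)) \<longlonglongrightarrow> 0)"

definition secrecy_capacity_CSI_D ::
  "real \<Rightarrow> real \<Rightarrow> real \<Rightarrow> real \<Rightarrow> real \<Rightarrow> real \<Rightarrow> ereal" where
  "secrecy_capacity_CSI_D q1 q1s p1 p2 p1s p2s =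
     (SUP R\<in>{R. achievable_CSI_D q1 q1s p1 p2 p1s p2s R}. ereal R)"

end

theory Submission
  imports Defs
begin

text \<open>
  Fix a realisation of the block states. By Fano's inequality, log K is at most
  1 + P_e log K + I(M;Y). Blockwise p \<le> p* \<le> 1/2, so each eavesdropper BSC is the cascade of
  the legitimate BSC with a further BSC: Z is a degraded version of Y. The data processing
  inequality for every message, together with the fact that the cascading BSC is doubly
  stochastic and therefore cannot decrease the entropy of the averaged output, yields
  I(M;Y) - I(M;Z) \<le> H(Z|X) - H(Y|X) = \<Sum>_i H(p*_i) - H(p_i).
  Averaging over the states turns I(M;Z) into the leakage and the entropy gap into NB times
  the claimed bound; dividing by NB and letting N, B \<rightarrow> \<infinity> with vanishing error probability
  and leakage bounds every achievable rate.
\<close>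

section \<open>Information measures of finite distributions\<close>

definition is_distribution :: "'a set \<Rightarrow> ('a \<Rightarrow> real) \<Rightarrow> bool" where
  "is_distribution A P \<longleftrightarrow> (\<forall>a\<in>A. 0 \<le> P a) \<and> sum P A = 1"

definition stochastic_matrix :: "'a set \<Rightarrow> 'b set \<Rightarrow> ('a \<Rightarrow> 'b \<Rightarrow> real) \<Rightarrow> bool" where
  "stochastic_matrix A B W \<longleftrightarrow> (\<forall>a\<in>A. is_distribution B (W a))"

definition channel_output :: "'a set \<Rightarrow> ('a \<Rightarrow> real) \<Rightarrow> ('a \<Rightarrow> 'b \<Rightarrow> real) \<Rightarrow> 'b \<Rightarrow> real" where
  "channel_output A P W b = (\<Sum>a\<in>A. P a * W a b)"

definition entropy :: "'a set \<Rightarrow> ('a \<Rightarrow> real) \<Rightarrow> real" where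
  "entropy A P = - (\<Sum>a\<in>A. P a * log 2 (P a))"

text \<open>Since x / 0 = 0 and log 2 0 = 0, a term with Q a = 0 < P a contributes 0 instead of
  infinity; lemmas about rel_entropy therefore assume that the support of P lies in that of Q.\<close>
definition rel_entropy :: "'a set \<Rightarrow> ('a \<Rightarrow> real) \<Rightarrow> ('a \<Rightarrow> real) \<Rightarrow> real" where
  "rel_entropy A P Q = (\<Sum>a\<in>A. xlog (P a) (Q a))"

definition mutual_info :: "'a set \<Rightarrow> ('a \<Rightarrow> real) \<Rightarrow> ('a \<Rightarrow> 'b \<Rightarrow> real) \<Rightarrow> 'b set \<Rightarrow> real" where
  "mutual_info A P W B = (\<Sum>a\<in>A. P a * rel_entropy B (W a) (channel_output A P W))"

lemma xlog_ge:
  assumes "0 \<le> p" "0 \<le> q" "0 < p \<Longrightarrow> 0 < q"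
  shows "(p - q) / ln 2 \<le> xlog p q"
proof (cases "p = 0")
  case True
  then show ?thesis using assms by (simp add: xlog_def divide_nonpos_pos)
next
  case False
  then have p: "0 < p" and q: "0 < q" using assms by auto
  have "p * ln (q / p) \<le> p * (q / p - 1)"
    using p q by (intro mult_left_mono ln_le_minus_one) auto
  also have "\<dots> = q - p" using p by (simp add: field_simps)
  finally have "p - q \<le> p * ln (p / q)"
    using p q by (simp add: ln_div algebra_simps)
  then show ?thesis
    using False by (simp add: xlog_def log_def divide_right_mono)
qed

lemma xlog_mult_right: "0 \<le> c \<Longrightarrow> xlog (a * c) (b * c) = c * xlog a b"
  by (cases "c = 0") (auto simp: xlog_def)

lemma xlog_mult:
  assumes "0 < c" "0 < d" "0 \<le> a" "0 < a \<Longrightarrow> 0 < b"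
  shows "xlog (c * a) (d * b) = c * xlog a b + c * a * log 2 (c / d)"
proof (cases "a = 0")
  case False
  then have "0 < a" "0 < b" using assms by auto
  then have "log 2 (c * a / (d * b)) = log 2 (c / d) + log 2 (a / b)"
    using assms by (simp add: log_mult log_divide)
  then show ?thesis using assms False by (simp add: xlog_def algebra_simps)
qed (simp add: xlog_def)

lemma gibbs_inequality:
  assumes "finite A" "\<And>a. a \<in> A \<Longrightarrow> 0 \<le> p a" "\<And>a. a \<in> A \<Longrightarrow> 0 \<le> q a"
    and "\<And>a. a \<in> A \<Longrightarrow> 0 < p a \<Longrightarrow> 0 < q a" and "sum q A \<le> sum p A"
  shows "0 \<le> (\<Sum>a\<in>A. xlog (p a) (q a))"
proof -
  have "0 \<le> (sum p A - sum q A) / ln 2"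
    using assms(5) by simp
  also have "\<dots> = (\<Sum>a\<in>A. (p a - q a) / ln 2)"
    by (simp add: sum_subtractf sum_divide_distrib[symmetric])
  also have "\<dots> \<le> (\<Sum>a\<in>A. xlog (p a) (q a))"
    using assms by (intro sum_mono xlog_ge) auto
  finally show ?thesis .
qed

lemma log_sum_inequality:
  assumes A: "finite A" and p: "\<And>a. a \<in> A \<Longrightarrow> 0 \<le> p a" and q: "\<And>a. a \<in> A \<Longrightarrow> 0 \<le> q a"
    and supp: "\<And>a. a \<in> A \<Longrightarrow> 0 < p a \<Longrightarrow> 0 < q a"
  shows "xlog (sum p A) (sum q A) \<le> (\<Sum>a\<in>A. xlog (p a) (q a))"
proof (cases "sum p A = 0")
  case True
  then have "\<forall>a\<in>A. p a = 0" using sum_nonneg_eq_0_iff[OF A] p by blast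
  then show ?thesis by (simp add: xlog_def)
next
  case False
  then obtain a where a: "a \<in> A" "0 < p a"
    using p by (metis less_eq_real_def sum.neutral)
  have P: "0 < sum p A" using False p by (simp add: less_le sum_nonneg)
  have Q: "0 < sum q A"
    using supp[OF a] member_le_sum[of a A q] A a q by fastforce
  define t where "t = sum p A / sum q A"
  have t: "0 < t" using P Q by (simp add: t_def)
  have "(\<Sum>a\<in>A. t * q a) = t * sum q A"
    by (simp add: sum_distrib_left)
  also have "\<dots> = sum p A"
    using Q by (simp add: t_def)
  finally have "(\<Sum>a\<in>A. t * q a) = sum p A" .
  then have "0 \<le> (\<Sum>a\<in>A. xlog (p a) (t * q a))"
    using t q supp by (intro gibbs_inequality[OF A p]) auto
  also have "\<dots> = (\<Sum>a\<in>A. xlog (p a) (q a) + p a * log 2 (1 / t))"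
    using xlog_mult[of 1 t "p _" "q _"] p supp t by (intro sum.cong) auto
  also have "\<dots> = (\<Sum>a\<in>A. xlog (p a) (q a)) - xlog (sum p A) (sum q A)"
    using False t by (simp add: sum.distrib sum_distrib_right[symmetric] xlog_def t_def log_divide algebra_simps)
  finally show ?thesis by simp
qed

lemma is_distribution_channel_output:
  assumes "is_distribution A P" "stochastic_matrix A B W"
  shows "is_distribution B (channel_output A P W)"
proof -
  have "(\<Sum>b\<in>B. \<Sum>a\<in>A. P a * W a b) = (\<Sum>a\<in>A. P a * sum (W a) B)"
    by (subst sum.swap) (simp add: sum_distrib_left)
  then show ?thesis
    using assms by (auto simp: is_distribution_def stochastic_matrix_def channel_output_def
        intro!: sum_nonneg)
qed

lemma channel_output_assoc:
  "channel_output B (channel_output A P W) V = channel_output A P (\<lambda>a. channel_output B (W a) V)"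
  unfolding channel_output_def
  by (rule ext) (simp add: sum_distrib_left sum_distrib_right mult.assoc sum.swap[of _ B])

lemma channel_output_pos:
  assumes "finite A" "a \<in> A" "\<And>a. a \<in> A \<Longrightarrow> 0 \<le> P a * W a b" "0 < P a * W a b"
  shows "0 < channel_output A P W b"
proof -
  have "P a * W a b \<le> channel_output A P W b"
    unfolding channel_output_def using assms by (intro member_le_sum) auto
  then show ?thesis using assms(4) by linarith
qed

lemma rel_entropy_channel_output_le:
  assumes A: "finite A" and B: "finite B" and V: "stochastic_matrix A B V"
    and P: "\<And>a. a \<in> A \<Longrightarrow> 0 \<le> P a" and Q: "\<And>a. a \<in> A \<Longrightarrow> 0 \<le> Q a"
    and supp: "\<And>a. a \<in> A \<Longrightarrow> 0 < P a \<Longrightarrow> 0 < Q a"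
  shows "rel_entropy B (channel_output A P V) (channel_output A Q V) \<le> rel_entropy A P Q"
proof -
  have V0: "0 \<le> V a b" if "a \<in> A" "b \<in> B" for a b
    using V that by (auto simp: stochastic_matrix_def is_distribution_def)
  have "rel_entropy B (channel_output A P V) (channel_output A Q V)
      \<le> (\<Sum>b\<in>B. \<Sum>a\<in>A. xlog (P a * V a b) (Q a * V a b))"
    unfolding rel_entropy_def channel_output_def
  proof (intro sum_mono log_sum_inequality[OF A])
    fix a b assume "a \<in> A" "b \<in> B" "0 < P a * V a b"
    then show "0 < Q a * V a b"
      using P[of a] supp[of a] by (auto simp: zero_less_mult_iff)
  qed (use P Q V0 in auto)
  also have "\<dots> = (\<Sum>a\<in>A. sum (V a) B * xlog (P a) (Q a))"
    using V0 by (subst sum.swap) (simp add: xlog_mult_right sum_distrib_right)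
  also have "\<dots> = rel_entropy A P Q"
    using V by (simp add: rel_entropy_def stochastic_matrix_def is_distribution_def)
  finally show ?thesis .
qed

lemma entropy_eq_log_card_minus_rel_entropy:
  assumes A: "finite A" and P: "is_distribution A P"
  shows "entropy A P = log 2 (card A) - rel_entropy A P (\<lambda>_. 1 / card A)"
proof -
  have "A \<noteq> {}" using P by (auto simp: is_distribution_def)
  then have n: "0 < real (card A)" using A by (simp add: card_gt_0_iff)
  have "xlog (P a) (1 / card A) = P a * log 2 (P a) + P a * log 2 (card A)" if "a \<in> A" for a
  proof (cases "P a = 0")
    case False
    then have "0 < P a" using P that by (auto simp: is_distribution_def less_le)
    then show ?thesis using n by (simp add: xlog_def log_mult distrib_left)
  qed (simp add: xlog_def)
  then have "rel_entropy A P (\<lambda>_. 1 / card A) = - entropy A P + sum P A * log 2 (card A)"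
    by (simp add: rel_entropy_def entropy_def sum.distrib sum_distrib_right)
  then show ?thesis using P by (simp add: is_distribution_def)
qed

lemma entropy_le_entropy_channel_output:
  assumes A: "finite A" and P: "is_distribution A P"
    and C: "stochastic_matrix A A C" and C': "stochastic_matrix A A (\<lambda>b a. C a b)"
  shows "entropy A P \<le> entropy A (channel_output A P C)"
proof -
  define U where "U = (\<lambda>_ :: 'a. 1 / real (card A))"
  have "A \<noteq> {}" using P by (auto simp: is_distribution_def)
  then have U0: "0 < U a" for a using A by (simp add: U_def card_gt_0_iff)
  have "channel_output A U C b = U b" if "b \<in> A" for b
    using C' that by (simp add: channel_output_def U_def stochastic_matrix_def is_distribution_def
        sum_divide_distrib[symmetric])
  then have "rel_entropy A (channel_output A P C) U
      = rel_entropy A (channel_output A P C) (channel_output A U C)"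
    by (simp add: rel_entropy_def)
  also have "\<dots> \<le> rel_entropy A P U"
    using P U0 by (intro rel_entropy_channel_output_le[OF A A C])
      (auto simp: is_distribution_def less_imp_le)
  finally have "rel_entropy A (channel_output A P C) U \<le> rel_entropy A P U" .
  moreover have "is_distribution A (channel_output A P C)"
    using is_distribution_channel_output[OF P C] .
  ultimately show ?thesis
    using P by (simp add: entropy_eq_log_card_minus_rel_entropy[OF A] U_def)
qed

lemma mutual_info_eq_entropy:
  assumes A: "finite A" and B: "finite B" and P: "is_distribution A P" and W: "stochastic_matrix A B W"
  shows "mutual_info A P W B = entropy B (channel_output A P W) - (\<Sum>a\<in>A. P a * entropy B (W a))"
proof -
  let ?Y = "channel_output A P W"
  have PW0: "0 \<le> P a * W a b" if "a \<in> A" "b \<in> B" for a b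
    using P W that by (auto simp: stochastic_matrix_def is_distribution_def)
  have summand: "P a * xlog (W a b) (?Y b) = P a * W a b * log 2 (W a b) - P a * W a b * log 2 (?Y b)"
    if a: "a \<in> A" and b: "b \<in> B" for a b
  proof (cases "P a * W a b = 0")
    case False
    then have "0 < P a * W a b" using PW0 a b by (simp add: less_le)
    moreover have "0 < ?Y b"
      by (rule channel_output_pos[OF A a]) (use PW0 b calculation in auto)
    ultimately show ?thesis using False by (simp add: xlog_def log_divide algebra_simps)
  qed (auto simp: xlog_def)
  have "mutual_info A P W B = (\<Sum>a\<in>A. \<Sum>b\<in>B. P a * W a b * log 2 (W a b))
      - (\<Sum>b\<in>B. \<Sum>a\<in>A. P a * W a b * log 2 (?Y b))"
    unfolding mutual_info_def rel_entropy_def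
    by (simp add: sum_distrib_left summand sum_subtractf sum.swap[of _ B])
  also have "\<dots> = entropy B ?Y - (\<Sum>a\<in>A. P a * entropy B (W a))"
    by (simp add: entropy_def channel_output_def sum_distrib_left sum_distrib_right mult.assoc sum_negf)
  finally show ?thesis .
qed

lemma mutual_info_channel_output_le:
  assumes A: "finite A" and B: "finite B" and C: "finite C"
    and P: "is_distribution A P" and W: "stochastic_matrix A B W" and V: "stochastic_matrix B C V"
  shows "mutual_info A P (\<lambda>a. channel_output B (W a) V) C \<le> mutual_info A P W B"
proof -
  let ?Y = "channel_output A P W"
  have P0: "0 \<le> P a" if "a \<in> A" for a using P that by (simp add: is_distribution_def)
  have W0: "0 \<le> W a b" if "a \<in> A" "b \<in> B" for a b
    using W that by (auto simp: stochastic_matrix_def is_distribution_def)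
  have "P a * rel_entropy C (channel_output B (W a) V) (channel_output B ?Y V)
      \<le> P a * rel_entropy B (W a) ?Y" if a: "a \<in> A" for a
  proof (cases "P a = 0")
    case False
    have "0 < ?Y b" if "b \<in> B" "0 < W a b" for b
    proof (rule channel_output_pos[OF A a])
      show "0 < P a * W a b" using P0[OF a] False that by simp
    qed (use P0 W0 that in auto)
    moreover have "0 \<le> ?Y b" if "b \<in> B" for b
      using is_distribution_channel_output[OF P W] that by (simp add: is_distribution_def)
    ultimately show ?thesis
      using P0[OF a] W0[OF a] by (intro mult_left_mono rel_entropy_channel_output_le[OF B C V]) auto
  qed simp
  then show ?thesis
    unfolding mutual_info_def channel_output_assoc[symmetric] by (intro sum_mono) auto
qed

lemma mutual_info_cong:
  "(\<And>a b. a \<in> A \<Longrightarrow> b \<in> B \<Longrightarrow> W a b = W' a b) \<Longrightarrow> mutual_info A P W B = mutual_info A P W' B"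
  by (simp add: mutual_info_def rel_entropy_def channel_output_def)

lemma entropy_channel_output_degraded_le:
  assumes A: "finite A" and B: "finite B" and P: "is_distribution A P"
    and W: "stochastic_matrix A B W" and C: "stochastic_matrix B B C"
    and hW: "\<And>a. a \<in> A \<Longrightarrow> entropy B (W a) = hW"
    and hV: "\<And>a. a \<in> A \<Longrightarrow> entropy B (channel_output B (W a) C) = hV"
  shows "entropy B (channel_output B (channel_output A P W) C) - entropy B (channel_output A P W)
    \<le> hV - hW"
proof -
  define V where "V = (\<lambda>a. channel_output B (W a) C)"
  have V: "stochastic_matrix A B V"
    using W is_distribution_channel_output[OF _ C] by (simp add: stochastic_matrix_def V_def)
  have average: "(\<Sum>a\<in>A. P a * h) = h" for h
    using P by (simp add: sum_distrib_right[symmetric] is_distribution_def)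
  have "entropy B (channel_output B (channel_output A P W) C) - hV = mutual_info A P V B"
    using mutual_info_eq_entropy[OF A B P V] hV average by (simp add: V_def channel_output_assoc)
  also have "\<dots> \<le> mutual_info A P W B"
    unfolding V_def by (rule mutual_info_channel_output_le[OF A B B P W C])
  also have "\<dots> = entropy B (channel_output A P W) - hW"
    using mutual_info_eq_entropy[OF A B P W] hW average by simp
  finally show ?thesis by simp
qed

lemma mutual_info_degraded_le:
  fixes enc :: "nat \<Rightarrow> 'a \<Rightarrow> real"
  assumes A: "finite A" and B: "finite B" and K: "1 \<le> K"
    and enc: "\<And>m. m < K \<Longrightarrow> is_distribution A (enc m)"
    and W: "stochastic_matrix A B W"
    and C: "stochastic_matrix B B C" and C': "stochastic_matrix B B (\<lambda>b' b. C b b')"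
    and hW: "\<And>a. a \<in> A \<Longrightarrow> entropy B (W a) = hW"
    and hV: "\<And>a. a \<in> A \<Longrightarrow> entropy B (channel_output B (W a) C) = hV"
  shows "mutual_info {..<K} (\<lambda>_. 1 / K) (\<lambda>m. channel_output A (enc m) W) B
    \<le> mutual_info {..<K} (\<lambda>_. 1 / K) (\<lambda>m. channel_output A (enc m) (\<lambda>a. channel_output B (W a) C)) B
       + (hV - hW)"
proof -
  define u where "u = (\<lambda>_ :: nat. 1 / real K)"
  define Y where "Y = (\<lambda>m. channel_output A (enc m) W)"
  define Z where "Z = (\<lambda>m. channel_output B (Y m) C)"
  have u: "is_distribution {..<K} u" using K by (simp add: is_distribution_def u_def)
  have Y: "stochastic_matrix {..<K} B Y"
    using is_distribution_channel_output[OF enc W] by (simp add: stochastic_matrix_def Y_def)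
  have Z: "stochastic_matrix {..<K} B Z"
    using Y is_distribution_channel_output[OF _ C] by (simp add: stochastic_matrix_def Z_def)
  have avg: "entropy B (channel_output {..<K} u Y) \<le> entropy B (channel_output {..<K} u Z)"
    unfolding Z_def channel_output_assoc[symmetric]
    by (intro entropy_le_entropy_channel_output[OF B _ C C'] is_distribution_channel_output[OF u Y])
  have "(\<Sum>m<K. u m * entropy B (Z m)) - (hV - hW) = (\<Sum>m<K. u m * (entropy B (Z m) - (hV - hW)))"
    using u by (simp add: right_diff_distrib sum_subtractf sum_distrib_right[symmetric] is_distribution_def)
  also have "\<dots> \<le> (\<Sum>m<K. u m * entropy B (Y m))"
    using entropy_channel_output_degraded_le[OF A B enc W C hW hV]
    by (intro sum_mono mult_left_mono) (auto simp: u_def Y_def Z_def algebra_simps)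
  finally have "mutual_info {..<K} u Y B \<le> mutual_info {..<K} u Z B + (hV - hW)"
    using avg mutual_info_eq_entropy[OF _ B u Y] mutual_info_eq_entropy[OF _ B u Z] by simp
  then show ?thesis by (simp add: u_def Y_def Z_def channel_output_assoc)
qed

section \<open>Fano's inequality\<close>

text \<open>Conditionally on the output b, this puts half of the mass on the decoded message and
  spreads the rest uniformly; Gibbs' inequality against it is Fano's inequality.\<close>
definition fano_guess :: "nat \<Rightarrow> ('b \<Rightarrow> nat) \<Rightarrow> nat \<Rightarrow> 'b \<Rightarrow> real" where
  "fano_guess K dec m b = (if dec b = m then 1 / 2 else 1 / (2 * real K))"

lemma sum_fano_guess_le: "(\<Sum>m<K. fano_guess K dec m b) \<le> 1"
proof -
  have "(\<Sum>m<K. fano_guess K dec m b) \<le> (\<Sum>m<K. (if dec b = m then 1 / 2 else 0) + 1 / (2 * real K))"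
    by (intro sum_mono) (auto simp: fano_guess_def)
  also have "\<dots> \<le> 1 / 2 + 1 / 2"
    by (cases "K = 0"; cases "dec b < K") (auto simp: sum.distrib)
  finally show ?thesis by simp
qed

lemma sum_fano_guess_weighted_le:
  "is_distribution B Y \<Longrightarrow> (\<Sum>m<K. \<Sum>b\<in>B. fano_guess K dec m b * Y b) \<le> 1"
proof -
  assume Y: "is_distribution B Y"
  have "(\<Sum>m<K. \<Sum>b\<in>B. fano_guess K dec m b * Y b) = (\<Sum>b\<in>B. (\<Sum>m<K. fano_guess K dec m b) * Y b)"
    by (subst sum.swap) (simp add: sum_distrib_right)
  also have "\<dots> \<le> (\<Sum>b\<in>B. 1 * Y b)"
    using Y sum_fano_guess_le by (intro sum_mono mult_right_mono) (auto simp: is_distribution_def)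
  finally show ?thesis using Y by (simp add: is_distribution_def)
qed

lemma xlog_fano_guess:
  assumes "1 \<le> K" "0 \<le> a" "0 < a \<Longrightarrow> 0 < y"
  shows "xlog (1 / K * a) (fano_guess K dec m b * y)
    = 1 / K * xlog a y + 1 / K * a * (1 + ((if dec b \<noteq> m then 1 else 0) - 1) * log 2 K)"
proof -
  have "log 2 ((1 / K) / fano_guess K dec m b) = 1 + ((if dec b \<noteq> m then 1 else 0) - 1) * log 2 K"
    using assms(1) by (simp add: fano_guess_def log_divide)
  then show ?thesis
    using xlog_mult[of "1 / K" "fano_guess K dec m b" a y] assms by (simp add: fano_guess_def)
qed

lemma fano_inequality:
  fixes P :: "nat \<Rightarrow> 'b \<Rightarrow> real" and dec :: "'b \<Rightarrow> nat"
  assumes B: "finite B" and K: "1 \<le> K" and P: "\<And>m. m < K \<Longrightarrow> is_distribution B (P m)"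
  shows "log 2 K \<le> 1 + (\<Sum>m<K. \<Sum>b\<in>B. P m b * (if dec b \<noteq> m then 1 else 0)) / K * log 2 K
                      + mutual_info {..<K} (\<lambda>_. 1 / K) P B"
proof -
  define u where "u = (\<lambda>_ :: nat. 1 / real K)"
  define Y where "Y = channel_output {..<K} u P"
  define p where "p = (\<lambda>(m, b). u m * P m b)"
  define q where "q = (\<lambda>(m, b). fano_guess K dec m b * Y b)"
  have u: "is_distribution {..<K} u" using K by (simp add: is_distribution_def u_def)
  have Y: "is_distribution B Y"
    unfolding Y_def by (rule is_distribution_channel_output[OF u]) (use P in \<open>simp add: stochastic_matrix_def\<close>)
  have uP0: "0 \<le> u m * P m b" if "m < K" "b \<in> B" for m b
    using P that by (simp add: is_distribution_def u_def)
  have Ypos: "0 < Y b" if "m < K" "b \<in> B" "0 < P m b" for m b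
    using channel_output_pos[of "{..<K}" m u P b] uP0 that K by (simp add: Y_def u_def)
  have g0: "0 < fano_guess K dec m b" for m b using K by (simp add: fano_guess_def)
  have sum_p: "(\<Sum>m<K. \<Sum>b\<in>B. u m * P m b) = 1"
    using P K by (simp add: u_def sum_divide_distrib[symmetric] is_distribution_def)
  have "0 \<le> (\<Sum>mb\<in>{..<K} \<times> B. xlog (p mb) (q mb))"
    using B uP0 g0 less_imp_le[OF g0] Y Ypos sum_fano_guess_weighted_le[OF Y, of K dec] sum_p
    by (intro gibbs_inequality)
      (auto simp: p_def q_def is_distribution_def sum.cartesian_product[symmetric] u_def
        zero_less_divide_iff)
  also have "\<dots> = (\<Sum>m<K. \<Sum>b\<in>B. u m * xlog (P m b) (Y b)
                    + u m * P m b * (1 + ((if dec b \<noteq> m then 1 else 0) - 1) * log 2 K))"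
  proof -
    have "xlog (p (m, b)) (q (m, b)) = u m * xlog (P m b) (Y b)
        + u m * P m b * (1 + ((if dec b \<noteq> m then 1 else 0) - 1) * log 2 K)" if "m < K" "b \<in> B" for m b
      using xlog_fano_guess[OF K, of "P m b" "Y b" dec m b] P[OF that(1)] that Ypos[OF that]
      by (simp add: p_def q_def u_def is_distribution_def)
    then show ?thesis by (simp add: sum.cartesian_product')
  qed
  also have "\<dots> = (\<Sum>m<K. \<Sum>b\<in>B. u m * xlog (P m b) (Y b)) + (\<Sum>m<K. \<Sum>b\<in>B. u m * P m b)
      + (\<Sum>m<K. \<Sum>b\<in>B. u m * (P m b * (if dec b \<noteq> m then 1 else 0))) * log 2 K
      - (\<Sum>m<K. \<Sum>b\<in>B. u m * P m b) * log 2 K"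
    by (simp add: algebra_simps sum.distrib sum_subtractf sum_distrib_right sum_distrib_left)
  also have "\<dots> = mutual_info {..<K} u P B + 1
      + (\<Sum>m<K. \<Sum>b\<in>B. P m b * (if dec b \<noteq> m then 1 else 0)) / K * log 2 K - log 2 K"
    unfolding sum_p by (simp add: mutual_info_def rel_entropy_def Y_def u_def sum_divide_distrib
        flip: sum_distrib_left)
  finally show ?thesis by (simp add: u_def algebra_simps)
qed

section \<open>Products of binary symmetric channels\<close>

lemma sum_length_Suc:
  "(\<Sum>xs | length xs = Suc n. g xs) = (\<Sum>a\<in>UNIV. \<Sum>xs | length xs = n. g ((a :: 'a :: finite) # xs))"
proof -
  have "{xs. length xs = Suc n} = (\<lambda>(a, xs). a # xs) ` (UNIV \<times> {xs :: 'a list. length xs = n})"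
    by (auto simp: image_iff length_Suc_conv)
  moreover have "inj_on (\<lambda>(a, xs). a # xs) (UNIV \<times> {xs :: 'a list. length xs = n})"
    by (auto simp: inj_on_def)
  ultimately show ?thesis
    by (simp add: sum.reindex sum.cartesian_product split_def)
qed

lemma Hb_eq: "Hb p = - p * log 2 p - (1 - p) * log 2 (1 - p)"
  by (auto simp: Hb_def)

definition bsc_channel :: "(nat \<Rightarrow> real) \<Rightarrow> bool list \<Rightarrow> bool list \<Rightarrow> real" where
  "bsc_channel c x y = (\<Prod>i<length x. if x ! i = y ! i then 1 - c i else c i)"

lemma bsc_channel_Cons:
  "bsc_channel c (u # x) (v # y) = (if u = v then 1 - c 0 else c 0) * bsc_channel (\<lambda>i. c (Suc i)) x y"
  unfolding bsc_channel_def
  by (simp only: length_Cons prod.lessThan_Suc_shift nth_Cons_0 nth_Cons_Suc list.inject)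

lemma bsc_channel_nonneg: "(\<And>i. 0 \<le> c i \<and> c i \<le> 1) \<Longrightarrow> 0 \<le> bsc_channel c x y"
  unfolding bsc_channel_def by (rule prod_nonneg) auto

lemma bsc_channel_commute: "length x = length y \<Longrightarrow> bsc_channel c x y = bsc_channel c y x"
  unfolding bsc_channel_def by (intro prod.cong) auto

lemma finite_words: "finite (words n)"
  using finite_lists_length_eq[of "UNIV :: bool set" n] by (simp add: words_def)

lemma sum_words_Suc:
  "(\<Sum>xs\<in>words (Suc n). g xs) = (\<Sum>xs\<in>words n. g (True # xs)) + (\<Sum>xs\<in>words n. g (False # xs))"
  unfolding words_def sum_length_Suc by (simp add: UNIV_bool add.commute)

lemma sum_bsc_channel: "length x = n \<Longrightarrow> (\<Sum>y\<in>words n. bsc_channel c x y) = 1"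
proof (induction n arbitrary: x c)
  case (Suc n)
  then obtain u x' where "x = u # x'" "length x' = n" by (auto simp: length_Suc_conv)
  with Suc.IH show ?case
    by (simp add: sum_words_Suc bsc_channel_Cons sum_distrib_left[symmetric])
qed (simp add: words_def bsc_channel_def)

lemma stochastic_matrix_bsc_channel:
  assumes "\<And>i. 0 \<le> c i \<and> c i \<le> 1"
  shows "stochastic_matrix (words n) (words n) (bsc_channel c)"
    and "stochastic_matrix (words n) (words n) (\<lambda>y x. bsc_channel c x y)"
  using assms sum_bsc_channel bsc_channel_nonneg bsc_channel_commute
  by (auto simp: stochastic_matrix_def is_distribution_def words_def)

lemma channel_output_bsc_channel:
  "length x = n \<Longrightarrow> length z = n \<Longrightarrow>
   channel_output (words n) (bsc_channel a x) (bsc_channel c) z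
     = bsc_channel (\<lambda>i. a i * (1 - c i) + (1 - a i) * c i) x z"
proof (induction n arbitrary: x z a c)
  case (Suc n)
  then obtain u x' w z' where "x = u # x'" "length x' = n" "z = w # z'" "length z' = n"
    by (auto simp: length_Suc_conv)
  note x = \<open>x = u # x'\<close> and z = \<open>z = w # z'\<close>
  have "channel_output (words (Suc n)) (bsc_channel a x) (bsc_channel c) z
      = (\<Sum>v\<in>{True, False}. (if u = v then 1 - a 0 else a 0) * (if v = w then 1 - c 0 else c 0)
          * channel_output (words n) (bsc_channel (\<lambda>i. a (Suc i)) x') (bsc_channel (\<lambda>i. c (Suc i))) z')"
    by (simp add: channel_output_def sum_words_Suc x z bsc_channel_Cons sum_distrib_left mult_ac)
  also have "\<dots> = bsc_channel (\<lambda>i. a i * (1 - c i) + (1 - a i) * c i) x z"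
    using Suc.IH \<open>length x' = n\<close> \<open>length z' = n\<close>
    by (cases u; cases w) (simp_all add: x z bsc_channel_Cons algebra_simps)
  finally show ?case .
qed (simp add: words_def bsc_channel_def channel_output_def)

lemma entropy_bsc_channel:
  assumes "length x = n" "\<And>i. 0 \<le> c i \<and> c i \<le> 1"
  shows "entropy (words n) (bsc_channel c x) = (\<Sum>i<n. Hb (c i))"
  using assms
proof (induction n arbitrary: x c)
  case (Suc n)
  then obtain u x' where x: "x = u # x'" "length x' = n" by (auto simp: length_Suc_conv)
  define f where "f v = (if u = v then 1 - c 0 else c 0)" for v
  define g where "g = bsc_channel (\<lambda>i. c (Suc i)) x'"
  have f0: "0 \<le> f v" for v using Suc.prems(2)[of 0] by (simp add: f_def)
  have g0: "0 \<le> g y" for y unfolding g_def by (rule bsc_channel_nonneg) (use Suc.prems(2) in auto)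
  have g1: "sum g (words n) = 1" unfolding g_def by (rule sum_bsc_channel[OF x(2)])
  have gH: "entropy (words n) g = (\<Sum>i<n. Hb (c (Suc i)))"
    unfolding g_def by (rule Suc.IH[OF x(2)]) (use Suc.prems(2) in auto)
  have split: "f v * g y * log 2 (f v * g y) = f v * log 2 (f v) * g y + f v * (g y * log 2 (g y))"
    for v y using f0[of v] g0[of y]
    by (cases "f v = 0 \<or> g y = 0") (auto simp: log_mult algebra_simps)
  have "entropy (words (Suc n)) (bsc_channel c x)
      = - (\<Sum>v\<in>{True, False}. \<Sum>y\<in>words n. f v * g y * log 2 (f v * g y))"
    by (simp add: entropy_def sum_words_Suc x bsc_channel_Cons f_def g_def)
  also have "\<dots> = - (\<Sum>v\<in>{True, False}. f v * log 2 (f v) * sum g (words n) - f v * entropy (words n) g)"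
    by (simp add: split sum.distrib sum_distrib_left sum_distrib_right entropy_def)
  also have "\<dots> = (\<Sum>i<Suc n. Hb (c i))"
    unfolding g1 gH sum.lessThan_Suc_shift Hb_eq[of "c 0"] by (simp add: f_def algebra_simps)
  finally show ?case .
qed (simp add: words_def bsc_channel_def entropy_def)

lemma bsc_cascade_crossover:
  fixes a b :: real
  assumes "0 \<le> a" "a \<le> b" "b \<le> 1 / 2"
  obtains c where "0 \<le> c" "c \<le> 1" "a * (1 - c) + (1 - a) * c = b"
proof (cases "a = 1 / 2")
  case True
  then show ?thesis using assms by (intro that[of 0]) auto
next
  case False
  define c where "c = (b - a) / (1 - 2 * a)"
  have "0 < 1 - 2 * a" using assms False by linarith
  then have "0 \<le> c" "c \<le> 1" "c * (1 - 2 * a) = b - a"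
    using assms by (auto simp: c_def field_simps)
  moreover have "a * (1 - c) + (1 - a) * c = a + c * (1 - 2 * a)"
    by (simp add: algebra_simps)
  ultimately show ?thesis by (intro that) auto
qed

lemma bsc_wiretap_converse:
  fixes a b :: "nat \<Rightarrow> real" and enc :: "nat \<Rightarrow> bool list \<Rightarrow> real" and dec :: "bool list \<Rightarrow> nat"
  assumes ab: "\<And>i. 0 \<le> a i" "\<And>i. a i \<le> b i" "\<And>i. b i \<le> 1 / 2"
    and K: "1 \<le> K" and enc: "\<And>m. m < K \<Longrightarrow> is_distribution (words n) (enc m)"
  shows "log 2 K \<le> mutual_info {..<K} (\<lambda>_. 1 / K) (\<lambda>m. channel_output (words n) (enc m) (bsc_channel b)) (words n)
      + ((\<Sum>i<n. Hb (b i)) - (\<Sum>i<n. Hb (a i))) + 1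
      + (\<Sum>m<K. \<Sum>y\<in>words n. channel_output (words n) (enc m) (bsc_channel a) y * (if dec y \<noteq> m then 1 else 0))
          / K * log 2 K"
proof -
  have "\<forall>i. \<exists>c. (0 \<le> c \<and> c \<le> 1) \<and> a i * (1 - c) + (1 - a i) * c = b i"
    using bsc_cascade_crossover[OF ab] by metis
  then obtain c where c: "\<And>i. 0 \<le> c i \<and> c i \<le> 1" "\<And>i. a i * (1 - c i) + (1 - a i) * c i = b i"
    by metis
  have a01: "0 \<le> a i \<and> a i \<le> 1" and b01: "0 \<le> b i \<and> b i \<le> 1" for i
    using ab[of i] by linarith+
  have cascade: "channel_output (words n) (bsc_channel a x) (bsc_channel c) z = bsc_channel b x z"
    if "x \<in> words n" "z \<in> words n" for x z
    using channel_output_bsc_channel[of x n z a c] that c(2) by (simp add: words_def)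
  let ?Y = "\<lambda>m. channel_output (words n) (enc m) (bsc_channel a)"
  let ?V = "\<lambda>x. channel_output (words n) (bsc_channel a x) (bsc_channel c)"
  have Y: "is_distribution (words n) (?Y m)" if "m < K" for m
    by (rule is_distribution_channel_output[OF enc[OF that] stochastic_matrix_bsc_channel(1)[OF a01]])
  have "mutual_info {..<K} (\<lambda>_. 1 / K) ?Y (words n)
      \<le> mutual_info {..<K} (\<lambda>_. 1 / K) (\<lambda>m. channel_output (words n) (enc m) ?V) (words n)
         + ((\<Sum>i<n. Hb (b i)) - (\<Sum>i<n. Hb (a i)))"
  proof (rule mutual_info_degraded_le[OF finite_words finite_words K enc])
    show "entropy (words n) (bsc_channel a x) = (\<Sum>i<n. Hb (a i))" if "x \<in> words n" for x
      using entropy_bsc_channel[OF _ a01] that by (simp add: words_def)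
    show "entropy (words n) (?V x) = (\<Sum>i<n. Hb (b i))" if "x \<in> words n" for x
      using entropy_bsc_channel[OF _ b01] that cascade by (simp add: entropy_def words_def)
  qed (use stochastic_matrix_bsc_channel[OF a01] stochastic_matrix_bsc_channel[OF c(1)] in auto)
  also have "mutual_info {..<K} (\<lambda>_. 1 / K) (\<lambda>m. channel_output (words n) (enc m) ?V) (words n)
      = mutual_info {..<K} (\<lambda>_. 1 / K) (\<lambda>m. channel_output (words n) (enc m) (bsc_channel b)) (words n)"
    by (rule mutual_info_cong) (auto simp: channel_output_def cascade[unfolded channel_output_def] intro!: sum.cong)
  finally show ?thesis
    using fano_inequality[where P = ?Y and dec = dec, OF finite_words K Y] by linarith
qed

section \<open>The block-fading wiretap channel\<close>

lemma bf_bsc_eq_bsc_channel: "bf_bsc N pa pb st = bsc_channel (\<lambda>i. if st ! (i div N) then pa else pb)"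
  by (intro ext) (simp add: bf_bsc_def bsc_channel_def Let_def)

lemma eve_out_eq_channel_output:
  "eve_out p1s p2s N B enc ss = (\<lambda>m. channel_output (words (N * B)) (enc m) (bf_bsc N p1s p2s (map snd ss)))"
  by (intro ext) (simp add: eve_out_def channel_output_def)

lemma valid_code_iff:
  "valid_code N B K enc \<longleftrightarrow> 1 \<le> K \<and> (\<forall>m<K. is_distribution (words (N * B)) (enc m))"
  by (auto simp: valid_code_def is_distribution_def)

lemma leakage_eq_mutual_info:
  "leakage q1 q1s p1s p2s N B K enc
    = (\<Sum>ss\<in>states B. state_prob q1 q1s ss *
         mutual_info {..<K} (\<lambda>_. 1 / K) (eve_out p1s p2s N B enc ss) (words (N * B)))"
  unfolding leakage_def mutual_info_def rel_entropy_def channel_output_def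
  by (simp add: sum_distrib_left sum_divide_distrib[symmetric])

lemma err_prob_eq:
  "err_prob q1 q1s p1 p2 N B K enc dec
    = (\<Sum>ss\<in>states B. state_prob q1 q1s ss *
         ((\<Sum>m<K. \<Sum>y\<in>words (N * B).
             channel_output (words (N * B)) (enc m) (bf_bsc N p1 p2 (map fst ss)) y
               * (if dec ss y \<noteq> m then 1 else 0)) / K))"
proof -
  let ?W = "words (N * B)" and ?ch = "bf_bsc N p1 p2"
  have "err_prob q1 q1s p1 p2 N B K enc dec
      = (\<Sum>ss\<in>states B. \<Sum>m<K. \<Sum>y\<in>?W. \<Sum>x\<in>?W. 1 / K * state_prob q1 q1s ss * enc m x
           * ?ch (map fst ss) x y * (if dec ss y \<noteq> m then 1 else 0))"
    unfolding err_prob_def by (subst sum.swap) (intro sum.cong refl sum.swap)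
  then show ?thesis
    by (simp add: channel_output_def sum_distrib_left sum_distrib_right sum_divide_distrib mult_ac)
qed

definition block_state_prob :: "real \<Rightarrow> real \<Rightarrow> bool \<times> bool \<Rightarrow> real" where
  "block_state_prob q1 q1s c = (if fst c then q1 else 1 - q1) * (if snd c then q1s else 1 - q1s)"

lemma state_prob_Cons:
  "state_prob q1 q1s (c # ss) = block_state_prob q1 q1s c * state_prob q1 q1s ss"
  unfolding state_prob_def block_state_prob_def
  by (simp only: length_Cons prod.lessThan_Suc_shift nth_Cons_0 nth_Cons_Suc)

lemma sum_UNIV_bool_prod: "(\<Sum>c\<in>UNIV. f c) = f (True, True) + f (True, False) + f (False, True) + f (False, False)"
  for f :: "bool \<times> bool \<Rightarrow> real"
  by (simp add: UNIV_Times_UNIV[symmetric] sum.cartesian_product[symmetric] UNIV_bool)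

lemma sum_block_state_prob: "(\<Sum>c\<in>UNIV. block_state_prob q1 q1s c) = 1"
  by (simp add: sum_UNIV_bool_prod block_state_prob_def algebra_simps)

lemma sum_states_Suc:
  "(\<Sum>ss\<in>states (Suc B). g ss) = (\<Sum>c\<in>UNIV. \<Sum>ss\<in>states B. g (c # ss))"
  unfolding states_def by (rule sum_length_Suc)

lemma sum_state_prob: "(\<Sum>ss\<in>states B. state_prob q1 q1s ss) = 1"
proof (induction B)
  case (Suc B)
  then show ?case
    by (simp add: sum_states_Suc state_prob_Cons sum_distrib_left[symmetric]
        sum_distrib_right[symmetric] sum_block_state_prob)
qed (simp add: states_def state_prob_def)

lemma state_prob_nonneg:
  "0 \<le> q1 \<Longrightarrow> q1 \<le> 1 \<Longrightarrow> 0 \<le> q1s \<Longrightarrow> q1s \<le> 1 \<Longrightarrow> 0 \<le> state_prob q1 q1s ss"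
  unfolding state_prob_def by (intro prod_nonneg) auto

lemma sum_state_prob_nth:
  "k < B \<Longrightarrow> (\<Sum>ss\<in>states B. state_prob q1 q1s ss * g (ss ! k)) = (\<Sum>c\<in>UNIV. block_state_prob q1 q1s c * g c)"
proof (induction B arbitrary: k)
  case (Suc B)
  show ?case
  proof (cases k)
    case 0
    then show ?thesis
      by (simp add: sum_states_Suc state_prob_Cons sum_distrib_left[symmetric]
          sum_distrib_right[symmetric] sum_state_prob mult.assoc)
  next
    case (Suc k')
    then show ?thesis
      using Suc.IH[of k'] Suc.prems sum_block_state_prob
      by (simp add: sum_states_Suc state_prob_Cons sum_distrib_left[symmetric]
          sum_distrib_right[symmetric] mult.assoc)
  qed
qed simp

lemma sum_state_prob_blocks:
  "(\<Sum>ss\<in>states B. state_prob q1 q1s ss * (\<Sum>i<N * B. h (ss ! (i div N))))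
    = real (N * B) * (\<Sum>c\<in>UNIV. block_state_prob q1 q1s c * h c)"
proof -
  have "i div N < B" if "i < N * B" for i
    using that by (simp add: less_mult_imp_div_less mult.commute)
  then have "(\<Sum>i<N * B. \<Sum>ss\<in>states B. state_prob q1 q1s ss * h (ss ! (i div N)))
      = (\<Sum>i<N * B. \<Sum>c\<in>UNIV. block_state_prob q1 q1s c * h c)"
    by (intro sum.cong refl sum_state_prob_nth) auto
  then show ?thesis
    by (simp add: sum_distrib_left sum.swap[of _ "states B"])
qed

lemma block_fading_converse:
  fixes q1 q1s p1 p2 p1s p2s :: real
  assumes q: "0 \<le> q1" "q1 \<le> 1" "0 \<le> q1s" "q1s \<le> 1"
    and p: "0 \<le> p1" "p1 \<le> p2" "p2 \<le> p1s" "p1s \<le> p2s" "p2s \<le> 1/2"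
    and code: "valid_code N B K enc"
  shows "log 2 K \<le> leakage q1 q1s p1s p2s N B K enc
     + real (N * B) * (q1s * Hb p1s + (1 - q1s) * Hb p2s - q1 * Hb p1 - (1 - q1) * Hb p2) + 1
     + err_prob q1 q1s p1 p2 N B K enc dec * log 2 K"
proof -
  define sp where "sp = state_prob q1 q1s"
  define h where "h c = Hb (if snd c then p1s else p2s) - Hb (if fst c then p1 else p2)" for c
  define I where "I ss = mutual_info {..<K} (\<lambda>_. 1 / K) (eve_out p1s p2s N B enc ss) (words (N * B))" for ss
  define Pe where "Pe ss = (\<Sum>m<K. \<Sum>y\<in>words (N * B).
      channel_output (words (N * B)) (enc m) (bf_bsc N p1 p2 (map fst ss)) y
        * (if dec ss y \<noteq> m then 1 else 0)) / K" for ss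
  have K: "1 \<le> K" and enc: "\<And>m. m < K \<Longrightarrow> is_distribution (words (N * B)) (enc m)"
    using code by (auto simp: valid_code_iff)
  have per_state: "log 2 K \<le> I ss + (\<Sum>i<N * B. h (ss ! (i div N))) + 1 + Pe ss * log 2 K"
    if ss: "ss \<in> states B" for ss
  proof -
    have "i div N < length ss" if "i < N * B" for i
      using ss that by (simp add: states_def less_mult_imp_div_less mult.commute)
    then have "(\<Sum>i<N * B. Hb (if map snd ss ! (i div N) then p1s else p2s))
        - (\<Sum>i<N * B. Hb (if map fst ss ! (i div N) then p1 else p2)) = (\<Sum>i<N * B. h (ss ! (i div N)))"
      by (simp add: h_def sum_subtractf)
    then show ?thesis
      using bsc_wiretap_converse[where a = "\<lambda>i. if map fst ss ! (i div N) then p1 else p2"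
          and b = "\<lambda>i. if map snd ss ! (i div N) then p1s else p2s" and dec = "dec ss", OF _ _ _ K enc] p
      by (simp add: I_def Pe_def eve_out_eq_channel_output bf_bsc_eq_bsc_channel)
  qed
  have sp0: "0 \<le> sp ss" for ss unfolding sp_def by (rule state_prob_nonneg[OF q])
  have "log 2 K = (\<Sum>ss\<in>states B. sp ss * log 2 K)"
    by (simp add: sp_def sum_state_prob flip: sum_distrib_right)
  also have "\<dots> \<le> (\<Sum>ss\<in>states B. sp ss * (I ss + (\<Sum>i<N * B. h (ss ! (i div N))) + 1 + Pe ss * log 2 K))"
    by (intro sum_mono mult_left_mono per_state sp0)
  also have "\<dots> = leakage q1 q1s p1s p2s N B K enc
      + real (N * B) * (\<Sum>c\<in>UNIV. block_state_prob q1 q1s c * h c) + 1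
      + err_prob q1 q1s p1 p2 N B K enc dec * log 2 K"
    by (simp add: distrib_left sum.distrib sum_distrib_right mult.assoc leakage_eq_mutual_info
        err_prob_eq sum_state_prob_blocks sum_state_prob sp_def I_def Pe_def)
  also have "(\<Sum>c\<in>UNIV. block_state_prob q1 q1s c * h c)
      = q1s * Hb p1s + (1 - q1s) * Hb p2s - q1 * Hb p1 - (1 - q1) * Hb p2"
    by (simp add: sum_UNIV_bool_prod block_state_prob_def h_def algebra_simps)
  finally show ?thesis .
qed

lemma rate_le_of_asymptotic_bound:
  fixes M lK L e :: "nat \<Rightarrow> real" and R C :: real
  assumes M: "filterlim M at_top sequentially"
    and bound: "\<And>n. lK n \<le> L n + M n * C + 1 + e n * lK n"
    and rate: "\<And>\<epsilon>. 0 < \<epsilon> \<Longrightarrow> eventually (\<lambda>n. R - \<epsilon> \<le> lK n / M n) sequentially"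
    and e: "e \<longlonglongrightarrow> 0" and L: "(\<lambda>n. L n / M n) \<longlonglongrightarrow> 0"
  shows "R \<le> C"
proof (rule field_le_epsilon)
  fix \<epsilon> :: real assume "0 < \<epsilon>"
  have "eventually (\<lambda>n. 0 < M n \<and> e n < 1 \<and> R - \<epsilon> \<le> lK n / M n) sequentially"
    using M order_tendstoD(2)[OF e] rate[OF \<open>0 < \<epsilon>\<close>]
    by (intro eventually_conj) (auto simp: filterlim_at_top_dense)
  then have "eventually (\<lambda>n. (R - \<epsilon>) * (1 - e n) \<le> L n / M n + C + inverse (M n)) sequentially"
  proof eventually_elim
    case (elim n)
    then have "(R - \<epsilon>) * (1 - e n) \<le> lK n / M n * (1 - e n)"
      by (intro mult_right_mono) auto
    also have "\<dots> = (lK n - e n * lK n) / M n" by (simp add: algebra_simps)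
    also have "\<dots> \<le> (L n + M n * C + 1) / M n"
      using bound[of n] elim by (intro divide_right_mono) auto
    also have "\<dots> = L n / M n + C + inverse (M n)"
      using elim by (simp add: field_simps)
    finally show ?case .
  qed
  moreover have "(\<lambda>n. (R - \<epsilon>) * (1 - e n)) \<longlonglongrightarrow> R - \<epsilon>"
    using e by (auto intro!: tendsto_eq_intros)
  moreover have "(\<lambda>n. L n / M n + C + inverse (M n)) \<longlonglongrightarrow> C"
    using tendsto_add[OF tendsto_add[OF L tendsto_const] tendsto_inverse_0_at_top[OF M]] by simp
  ultimately have "R - \<epsilon> \<le> C"
    by (intro tendsto_le[OF trivial_limit_sequentially]) auto
  then show "R \<le> C + \<epsilon>" by simp
qed

lemma achievable_CSI_D_le:
  fixes q1 q1s p1 p2 p1s p2s :: real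
  assumes "0 \<le> q1" "q1 \<le> 1" "0 \<le> q1s" "q1s \<le> 1"
    and "0 \<le> p1" "p1 \<le> p2" "p2 \<le> p1s" "p1s \<le> p2s" "p2s \<le> 1/2"
    and "achievable_CSI_D q1 q1s p1 p2 p1s p2s R"
  shows "R \<le> q1s * Hb p1s + (1 - q1s) * Hb p2s - q1 * Hb p1 - (1 - q1) * Hb p2"
proof -
  obtain N B K enc dec where
    N: "filterlim N at_top sequentially" and B: "filterlim B at_top sequentially"
    and codes: "\<And>n. valid_code (N n) (B n) (K n) (enc n)"
    and rate: "\<forall>\<epsilon>>0. eventually (\<lambda>n. log 2 (real (K n)) / real (N n * B n) \<ge> R - \<epsilon>) sequentially"
    and err: "(\<lambda>n. err_prob q1 q1s p1 p2 (N n) (B n) (K n) (enc n) (dec n)) \<longlonglongrightarrow> 0"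
    and leak: "(\<lambda>n. leakage q1 q1s p1s p2s (N n) (B n) (K n) (enc n) / real (N n * B n)) \<longlonglongrightarrow> 0"
    using assms(10) unfolding achievable_CSI_D_def by blast
  let ?M = "\<lambda>n. real (N n * B n)"
  have M: "filterlim ?M at_top sequentially"
    unfolding of_nat_mult
    using filterlim_compose[OF filterlim_real_sequentially N]
      filterlim_compose[OF filterlim_real_sequentially B]
    by (rule filterlim_at_top_mult_at_top)
  show ?thesis
  proof (rule rate_le_of_asymptotic_bound[OF M _ _ err leak])
    show "log 2 (K n) \<le> leakage q1 q1s p1s p2s (N n) (B n) (K n) (enc n)
        + ?M n * (q1s * Hb p1s + (1 - q1s) * Hb p2s - q1 * Hb p1 - (1 - q1) * Hb p2) + 1
        + err_prob q1 q1s p1 p2 (N n) (B n) (K n) (enc n) (dec n) * log 2 (K n)" for n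
      by (rule block_fading_converse[OF assms(1-9) codes])
    show "eventually (\<lambda>n. R - \<epsilon> \<le> log 2 (K n) / ?M n) sequentially" if "0 < \<epsilon>" for \<epsilon>
      using rate that by blast
  qed
qed

theorem lemma2:
  fixes q1 q1s p1 p2 p1s p2s :: real
  assumes "0 \<le> q1" "q1 \<le> 1" "0 \<le> q1s" "q1s \<le> 1"
    and "0 \<le> p1" "p1 \<le> p2" "p2 \<le> p1s" "p1s \<le> p2s" "p2s \<le> 1/2"
  shows "secrecy_capacity_CSI_D q1 q1s p1 p2 p1s p2s
           \<le> ereal (q1s * Hb p1s + (1 - q1s) * Hb p2s - q1 * Hb p1 - (1 - q1) * Hb p2)"
  unfolding secrecy_capacity_CSI_D_def
  using achievable_CSI_D_le[OF assms] by (intro SUP_least) simp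

end
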